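(* Let $\Pi\subset\mathbb{R}^2$ be a segment or the union of two segments intersecting only at one endpoint. Then, for every $\delta>0$ small enough, there exist a set $\Delta\subset\mathbb{R}^2$ (depending on $\delta$) and a piecewise affine homeomorphism $\Phi_\delta:\mathbb{R}^2\setminus\Pi\to\mathbb{R}^2\setminus\Delta$ such that: (i) $\mathbb{R}^2\setminus\Delta$ is a Lipschitz domain; (ii) $\Phi_\delta(x)=x$ for every $x\in\mathbb{R}^2\setminus(\Pi)_\delta$; (iii) $\|\Phi_\delta-\mathrm{Id}\|_{W^{1,\infty}(\mathbb{R}^2\setminus\Pi)}\to0$ as $\delta\to0$.
   Context: For $U\subset\mathbb{R}^2$ and $\delta>0$, $(U)_\delta:=U+B_\delta(0)$ denotes the open $\delta$-neighborhood of $U$. *)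

theory Defs
  imports "HOL-Analysis.Analysis"
begin

definition nbhd :: "(real^2) set \<Rightarrow> real \<Rightarrow> (real^2) set" where
  "nbhd U \<delta> = {x + y | x y. x \<in> U \<and> y \<in> ball 0 \<delta>}"

definition segment_or_two_segments :: "(real^2) set \<Rightarrow> bool" where
  "segment_or_two_segments P \<longleftrightarrow>
     (\<exists>a b. a \<noteq> b \<and> P = closed_segment a b) \<or>
     (\<exists>a b c. a \<noteq> b \<and> b \<noteq> c \<and> closed_segment a b \<inter> closed_segment b c = {b} \<and>
        P = closed_segment a b \<union> closed_segment b c)"

definition piecewise_affine_on :: "(real^2) set \<Rightarrow> (real^2 \<Rightarrow> real^2) \<Rightarrow> bool" where
  "piecewise_affine_on S f \<longleftrightarrow>
     (\<exists>\<P>. finite \<P> \<and> (\<forall>P\<in>\<P>. polyhedron P) \<and> S \<subseteq> \<Union>\<P> \<and>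
        (\<forall>P\<in>\<P>. \<exists>A b. linear A \<and> (\<forall>x\<in>P \<inter> S. f x = A x + b)))"

definition lipschitz_domain :: "(real^2) set \<Rightarrow> bool" where
  "lipschitz_domain U \<longleftrightarrow> open U \<and> connected U \<and>
     (\<forall>x\<in>frontier U. \<exists>r>0. \<exists>R::real^2 \<Rightarrow> real^2. \<exists>h::real \<Rightarrow> real. \<exists>L.
        orthogonal_transformation R \<and> L-lipschitz_on UNIV h \<and>
        U \<inter> ball x r = {y \<in> ball x r. (R (y - x)) $ 2 < h ((R (y - x)) $ 1)})"

text \<open>The gradient is the a.e. classical derivative (which agrees with the weak gradient for
  the continuous piecewise affine maps considered here).\<close>
definition Linf_part :: "(real^2) set \<Rightarrow> (real^2 \<Rightarrow> real^2) \<Rightarrow> ereal" where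
  "Linf_part S f = Inf {C. AE x in lebesgue_on S. ereal (norm (f x)) \<le> C}"

definition grad_Linf_part :: "(real^2) set \<Rightarrow> (real^2 \<Rightarrow> real^2) \<Rightarrow> ereal" where
  "grad_Linf_part S f = Inf {C. AE x in lebesgue_on S.
       f differentiable (at x) \<and> ereal (onorm (frechet_derivative f (at x))) \<le> C}"

definition W1inf_norm :: "(real^2) set \<Rightarrow> (real^2 \<Rightarrow> real^2) \<Rightarrow> ereal" where
  "W1inf_norm S f = Linf_part S f + grad_Linf_part S f"

end

theory Submission
  imports Defs
begin

text \<open>After a rigid motion, the two segments meeting at the corner \<open>b\<close> become the graph
  \<open>t = f(s)\<close>, \<open>-ra \<le> s \<le> rc\<close>, of a piecewise linear profile \<open>f\<close>, and a tent function \<open>k\<close>,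
  equal to \<open>1\<close> at the corner and to \<open>0\<close> at the far endpoints, is nonnegative exactly on this range.
  Writing \<open>z = t - f(s)\<close> for the signed height above the slit, \<open>\<Phi>\<close> moves every point along the
  \<open>t\<close>-axis by \<open>m sgn z max 0 (\<sigma> k(s) - \<bar>z\<bar>)\<close>. On each line \<open>s = const\<close> this is an increasing
  bijection from the line punctured at the slit onto the complement of the gap \<open>\<bar>z\<bar> \<le> m \<sigma> k\<close>, so
  \<open>\<Phi>\<close> is a homeomorphism onto the complement of the lens \<open>\<Delta> = {k \<ge> 0, \<bar>z\<bar> \<le> m \<sigma> k}\<close>, a
  quadrilateral whose boundary is locally a Lipschitz graph (the two tips are convex cones).
  The map moves only points with \<open>\<bar>z\<bar> < \<sigma> k \<le> \<sigma>\<close>, which lie in the \<open>\<sigma>\<close>-neighbourhood of the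
  slit, by at most \<open>m \<sigma>\<close>, and it is affine with slope \<open>O(m)\<close> on each of the finitely many
  polygons cut out by the lines \<open>s = 0\<close>, \<open>z = 0\<close> and \<open>z = \<plusminus>\<sigma> k\<close>. Taking \<open>m = \<sigma> = \<delta>\<close> makes the
  \<open>W\<^sup>1\<^sup>,\<^sup>\<infinity>\<close> norm of \<open>\<Phi> - id\<close> of order \<open>\<delta>\<close>. A single segment is split at its midpoint.\<close>

section \<open>Almost everywhere derivatives and the \<open>W\<^sup>1\<^sup>,\<^sup>\<infinity>\<close> norm\<close>

lemma AE_differentiable_onorm_le_piecewise_affine:
  fixes F :: "'a::euclidean_space \<Rightarrow> 'b::real_normed_vector"
  assumes S: "open S" and fin: "finite \<P>" and cvx: "\<And>P. P \<in> \<P> \<Longrightarrow> convex P" and cov: "S \<subseteq> \<Union>\<P>"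
    and aff: "\<And>P. P \<in> \<P> \<Longrightarrow> \<exists>A c. linear A \<and> onorm A \<le> C \<and> (\<forall>x\<in>P \<inter> S. F x = A x + c)"
  shows "AE x in lebesgue_on S. F differentiable (at x) \<and> onorm (frechet_derivative F (at x)) \<le> C"
proof (rule AE_I')
  let ?N = "S \<inter> \<Union>(frontier ` \<P>)"
  have "negligible (\<Union>(frontier ` \<P>))"
    using fin cvx by (intro negligible_Union) (auto intro: negligible_convex_frontier)
  then have "negligible ?N" by (rule negligible_subset) auto
  moreover have "S \<in> sets lebesgue" using S by auto
  ultimately show "?N \<in> null_sets (lebesgue_on S)"
    by (simp add: null_sets_restrict_space negligible_iff_null_sets)
  show "{x \<in> space (lebesgue_on S). \<not> (F differentiable (at x) \<and> onorm (frechet_derivative F (at x)) \<le> C)} \<subseteq> ?N"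
  proof clarify
    fix x assume "x \<in> space (lebesgue_on S)" and bad: "\<not> (F differentiable (at x) \<and> onorm (frechet_derivative F (at x)) \<le> C)"
    then have x: "x \<in> S" by simp
    show "x \<in> ?N"
    proof (rule ccontr)
      assume "x \<notin> ?N"
      obtain P where P: "P \<in> \<P>" "x \<in> P" using cov x by auto
      then have xP: "x \<in> interior P"
        using \<open>x \<notin> ?N\<close> x closure_subset[of P] by (auto simp: frontier_def)
      obtain A c where A: "linear A" "onorm A \<le> C" "\<forall>y\<in>P \<inter> S. F y = A y + c" using aff P(1) by blast
      have "((\<lambda>y. A y + c) has_derivative A) (at x)"
        using A(1) by (auto intro!: derivative_eq_intros simp: linear_imp_has_derivative)
      then have "(F has_derivative A) (at x)"
        by (rule has_derivative_transform_within_open[where s="interior P \<inter> S"])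
          (use S xP x A(3) interior_subset[of P] in auto)
      then show False
        using bad A(2) frechet_derivative_at by (metis differentiable_def)
    qed
  qed
qed

lemma not_AE_lebesgue_on_False:
  fixes S :: "'a::euclidean_space set"
  assumes "open S" "S \<noteq> {}"
  shows "\<not> (AE x in lebesgue_on S. False)"
proof
  assume "AE x in lebesgue_on S. False"
  then obtain N where N: "N \<in> null_sets (lebesgue_on S)" "S \<subseteq> N"
    by (auto simp: eventually_ae_filter)
  have "S \<in> sets lebesgue" using assms(1) by auto
  then have "N \<in> null_sets lebesgue" using N(1) null_sets_restrict_space by blast
  then have "negligible S" using N(2) negligible_iff_null_sets negligible_subset by blast
  then show False using open_not_negligible assms by blast
qed

lemma Inf_AE_bounds_nonneg:
  fixes S :: "'a::euclidean_space set"
  assumes "open S" "S \<noteq> {}" and "\<And>x. P x \<Longrightarrow> (0::ereal) \<le> Q x"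
  shows "0 \<le> Inf {C. AE x in lebesgue_on S. P x \<and> Q x \<le> C}"
proof (rule Inf_greatest, rule ccontr)
  fix C assume "C \<in> {C. AE x in lebesgue_on S. P x \<and> Q x \<le> C}" "\<not> 0 \<le> C"
  then have "AE x in lebesgue_on S. P x \<and> Q x \<le> C" by simp
  then have "AE x in lebesgue_on S. False"
    by (rule eventually_mono) (use assms(3) \<open>\<not> 0 \<le> C\<close> order_trans in blast)
  then show False using not_AE_lebesgue_on_False assms(1,2) by blast
qed

lemma W1inf_norm_nonneg:
  assumes "open S" "S \<noteq> {}"
  shows "0 \<le> W1inf_norm S f"
proof -
  have "0 \<le> Linf_part S f"
    unfolding Linf_part_def using Inf_AE_bounds_nonneg[OF assms, of "\<lambda>x. True"] by simp
  moreover have "0 \<le> grad_Linf_part S f"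
    unfolding grad_Linf_part_def
    by (rule Inf_AE_bounds_nonneg[OF assms])
      (auto intro: onorm_pos_le has_derivative_bounded_linear frechet_derivative_works[THEN iffD1])
  ultimately show ?thesis unfolding W1inf_norm_def by simp
qed

lemma W1inf_norm_le:
  assumes "\<And>x. x \<in> S \<Longrightarrow> norm (f x) \<le> A"
    and "AE x in lebesgue_on S. f differentiable (at x) \<and> onorm (frechet_derivative f (at x)) \<le> B"
  shows "W1inf_norm S f \<le> ereal (A + B)"
proof -
  have "Linf_part S f \<le> ereal A"
    unfolding Linf_part_def by (rule Inf_lower) (use assms(1) in auto)
  moreover have "grad_Linf_part S f \<le> ereal B"
    unfolding grad_Linf_part_def by (rule Inf_lower) (use assms(2) in auto)
  ultimately show ?thesis unfolding W1inf_norm_def using add_mono by fastforce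
qed

section \<open>Plane geometry\<close>

definition perp :: "real^2 \<Rightarrow> real^2" where
  "perp v = (\<chi> i. if i = 1 then - v$2 else v$1)"

lemma perp_nth [simp]: "perp v $ 1 = - v$2" "perp v $ 2 = v $ 1"
  by (auto simp: perp_def)

lemma inner_vec2: "(x::real^2) \<bullet> y = x$1 * y$1 + x$2 * y$2"
  by (simp add: inner_vec_def sum_2)

lemma perp_inner_perp: "perp v \<bullet> perp w = v \<bullet> w"
  and perp_inner_self: "perp v \<bullet> v = 0"
  and inner_perp_self: "v \<bullet> perp v = 0"
  by (simp_all add: inner_vec2 algebra_simps)

lemma perp_minus: "perp (- v) = - perp v"
  by (simp add: vec_eq_iff forall_2)

lemma unit_vec2_decomposition:
  fixes n x :: "real^2"
  assumes "n \<bullet> n = 1"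
  shows "x = (n \<bullet> x) *\<^sub>R n + (perp n \<bullet> x) *\<^sub>R perp n"
proof -
  have "n$1 * n$1 + n$2 * n$2 = 1" using assms by (simp add: inner_vec2)
  moreover have "(n$1 * x$1 + n$2 * x$2) * n$1 + (- n$2 * x$1 + n$1 * x$2) * (- n$2)
     = x$1 * (n$1 * n$1 + n$2 * n$2)" by (simp add: algebra_simps)
  moreover have "(n$1 * x$1 + n$2 * x$2) * n$2 + (- n$2 * x$1 + n$1 * x$2) * n$1
     = x$2 * (n$1 * n$1 + n$2 * n$2)" by (simp add: algebra_simps)
  ultimately show ?thesis by (simp add: vec_eq_iff forall_2 inner_vec2)
qed

lemma image_affine_Icc_eq_closed_segment:
  fixes b d :: "'a::real_vector"
  assumes "u \<le> v"
  shows "(\<lambda>t. b + t *\<^sub>R d) ` {u..v} = closed_segment (b + u *\<^sub>R d) (b + v *\<^sub>R d)"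
proof -
  have "closed_segment (b + u *\<^sub>R d) (b + v *\<^sub>R d) = (\<lambda>x. b + x) ` closed_segment (u *\<^sub>R d) (v *\<^sub>R d)"
    by (rule closed_segment_translation)
  also have "closed_segment (u *\<^sub>R d) (v *\<^sub>R d) = (\<lambda>t. t *\<^sub>R d) ` closed_segment u v"
    by (rule closed_segment_linear_image) (rule linear_scaleR_left)
  also have "closed_segment u v = {u..v}" using assms by (simp add: closed_segment_eq_real_ivl)
  finally show ?thesis by (simp add: image_image)
qed

lemma sgn_diff_neq_if_segments_meet_at_endpoint:
  fixes a b c :: "'a::real_normed_vector"
  assumes "a \<noteq> b" "b \<noteq> c" "closed_segment a b \<inter> closed_segment b c = {b}"
  shows "sgn (a - b) \<noteq> sgn (c - b)"
proof
  assume same: "sgn (a - b) = sgn (c - b)"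
  have on_segment: "x \<in> closed_segment b y"
    if "x \<noteq> b" "norm (x - b) \<le> norm (y - b)" "sgn (x - b) = sgn (y - b)" for x y
  proof -
    define t where "t = norm (x - b) / norm (y - b)"
    have "y \<noteq> b" using that(1,2) by auto
    then have "0 \<le> t" "t \<le> 1" using that(2) by (simp_all add: t_def)
    have "x - b = norm (x - b) *\<^sub>R sgn (x - b)" using that(1) by (simp add: sgn_div_norm)
    also have "\<dots> = norm (x - b) *\<^sub>R sgn (y - b)" by (simp only: that(3))
    also have "\<dots> = t *\<^sub>R (y - b)" by (simp add: t_def sgn_div_norm divide_inverse)
    finally have "x = b + t *\<^sub>R (y - b)" by (simp add: diff_eq_eq add.commute)
    also have "\<dots> = (1 - t) *\<^sub>R b + t *\<^sub>R y" by (simp add: algebra_simps)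
    finally show ?thesis unfolding in_segment using \<open>0 \<le> t\<close> \<open>t \<le> 1\<close> by blast
  qed
  consider "norm (a - b) \<le> norm (c - b)" | "norm (c - b) \<le> norm (a - b)" by linarith
  then show False
  proof cases
    case 1
    then have "a \<in> closed_segment b c" using on_segment[of a c] assms(1) same by blast
    moreover have "a \<in> closed_segment a b" by simp
    ultimately have "a \<in> closed_segment a b \<inter> closed_segment b c" by blast
    then show False using assms(1,3) by simp
  next
    case 2
    then have "c \<in> closed_segment a b" using on_segment[of c a] assms(2) same by (simp add: closed_segment_commute)
    moreover have "c \<in> closed_segment b c" by simp
    ultimately have "c \<in> closed_segment a b \<inter> closed_segment b c" by blast
    then show False using assms(2,3) by simp
  qed
qed

section \<open>Lipschitz charts\<close>

lemma lipschitz_on_affine_plus_ramp: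
  fixes c0 c1 c2 d :: real
  shows "(\<bar>c1\<bar> + \<bar>c2\<bar>)-lipschitz_on UNIV (\<lambda>t. c0 + c1 * t + c2 * max (t + d) 0)"
proof (rule lipschitz_onI)
  fix x y :: real
  have ramp: "\<bar>max (x + d) 0 - max (y + d) 0\<bar> \<le> \<bar>x - y\<bar>" by (simp add: max_def abs_if)
  have "dist (c0 + c1 * x + c2 * max (x + d) 0) (c0 + c1 * y + c2 * max (y + d) 0)
      = \<bar>c1 * (x - y) + c2 * (max (x + d) 0 - max (y + d) 0)\<bar>" by (simp add: dist_real_def algebra_simps)
  also have "\<dots> \<le> \<bar>c1\<bar> * \<bar>x - y\<bar> + \<bar>c2\<bar> * \<bar>max (x + d) 0 - max (y + d) 0\<bar>"
    by (rule order_trans[OF abs_triangle_ineq]) (simp add: abs_mult)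
  also have "\<dots> \<le> \<bar>c1\<bar> * \<bar>x - y\<bar> + \<bar>c2\<bar> * \<bar>x - y\<bar>"
    using ramp by (simp add: mult_left_mono)
  finally show "dist (c0 + c1 * x + c2 * max (x + d) 0) (c0 + c1 * y + c2 * max (y + d) 0) \<le> (\<bar>c1\<bar> + \<bar>c2\<bar>) * dist x y"
    by (simp add: dist_real_def algebra_simps)
qed simp

definition lipschitz_chart_at :: "(real^2) set \<Rightarrow> real^2 \<Rightarrow> bool" where
  "lipschitz_chart_at U x \<longleftrightarrow> (\<exists>r>0. \<exists>R::real^2 \<Rightarrow> real^2. \<exists>h::real \<Rightarrow> real. \<exists>L.
     orthogonal_transformation R \<and> L-lipschitz_on UNIV h \<and>
     U \<inter> ball x r = {y \<in> ball x r. (R (y - x)) $ 2 < h ((R (y - x)) $ 1)})"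

lemma lipschitz_domain_iff:
  "lipschitz_domain U \<longleftrightarrow> open U \<and> connected U \<and> (\<forall>x\<in>frontier U. lipschitz_chart_at U x)"
  by (simp add: lipschitz_domain_def lipschitz_chart_at_def)

lemma lipschitz_chart_at_subgraph:
  fixes U :: "(real^2) set" and v x :: "real^2"
  assumes vv: "v \<bullet> v = 1" and cc: "c * c = 1" and Lh: "L-lipschitz_on UNIV h" and r: "r > 0"
    and U: "\<And>y. y \<in> ball x r \<Longrightarrow> y \<in> U \<longleftrightarrow> (c *\<^sub>R perp v) \<bullet> (y - x) < h (v \<bullet> (y - x))"
  shows "lipschitz_chart_at U x"
proof -
  define R :: "real^2 \<Rightarrow> real^2" where "R y = (\<chi> i. if i = 1 then v \<bullet> y else (c *\<^sub>R perp v) \<bullet> y)" for y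
  have R1: "R y $ 1 = v \<bullet> y" and R2: "R y $ 2 = (c *\<^sub>R perp v) \<bullet> y" for y by (simp_all add: R_def)
  have "linear R"
    by (rule linearI) (simp_all add: vec_eq_iff forall_2 R1 R2 inner_add_right)
  moreover have "R y \<bullet> R w = y \<bullet> w" for y w
  proof -
    have "R y \<bullet> R w = (v \<bullet> y) * (v \<bullet> w) + (c * c) * ((perp v \<bullet> y) * (perp v \<bullet> w))"
      by (simp add: inner_vec2[of "R y"] R1 R2 algebra_simps)
    also have "\<dots> = (v \<bullet> v) * (y \<bullet> w)"
      unfolding cc by (simp add: inner_vec2 algebra_simps)
    finally show ?thesis using vv by simp
  qed
  ultimately have "orthogonal_transformation R" by (simp add: orthogonal_transformation_def)
  moreover have "U \<inter> ball x r = {y \<in> ball x r. (R (y - x)) $ 2 < h ((R (y - x)) $ 1)}"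
    using U by (auto simp: R1 R2)
  ultimately show ?thesis using Lh r unfolding lipschitz_chart_at_def by blast
qed

lemma cone_in_rotated_coordinates:
  fixes p q \<alpha> \<gamma> :: real
  assumes \<gamma>: "\<gamma> > 0"
  defines "N \<equiv> sqrt (1 + \<alpha> * \<alpha>)"
  shows "(p + \<alpha> * q) / N < \<alpha> * ((q - \<alpha> * p) / N) + (1 + \<alpha> * \<alpha>) * \<bar>(q - \<alpha> * p) / N\<bar> / \<gamma>
     \<longleftrightarrow> \<not> (p \<ge> 0 \<and> \<bar>q - \<alpha> * p\<bar> \<le> \<gamma> * p)"
proof -
  have A0: "1 + \<alpha> * \<alpha> > 0" by (simp add: add_pos_nonneg)
  then have N0: "N > 0" and NN: "N * N = 1 + \<alpha> * \<alpha>" unfolding N_def by simp_all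
  have "(p + \<alpha> * q) / N - \<alpha> * ((q - \<alpha> * p) / N) = ((N * N) * p) / N"
    unfolding NN using N0 by (simp add: field_simps)
  then have shift: "(p + \<alpha> * q) / N - \<alpha> * ((q - \<alpha> * p) / N) = N * p" using N0 by simp
  have abs_div: "\<bar>(q - \<alpha> * p) / N\<bar> = \<bar>q - \<alpha> * p\<bar> / N" using N0 by simp
  have "(p + \<alpha> * q) / N < \<alpha> * ((q - \<alpha> * p) / N) + (1 + \<alpha> * \<alpha>) * \<bar>(q - \<alpha> * p) / N\<bar> / \<gamma>
      \<longleftrightarrow> N * p < (1 + \<alpha> * \<alpha>) * (\<bar>q - \<alpha> * p\<bar> / N) / \<gamma>"
    unfolding abs_div using shift by (simp add: algebra_simps)
  also have "\<dots> \<longleftrightarrow> N * p * N * \<gamma> < (1 + \<alpha> * \<alpha>) * \<bar>q - \<alpha> * p\<bar>"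
    using N0 \<gamma> by (simp add: field_simps)
  also have "\<dots> \<longleftrightarrow> (1 + \<alpha> * \<alpha>) * (\<gamma> * p) < (1 + \<alpha> * \<alpha>) * \<bar>q - \<alpha> * p\<bar>"
    by (simp add: NN[symmetric] algebra_simps)
  also have "\<dots> \<longleftrightarrow> \<gamma> * p < \<bar>q - \<alpha> * p\<bar>"
    by (rule mult_less_cancel_left_pos[OF A0])
  also have "\<dots> \<longleftrightarrow> \<not> (p \<ge> 0 \<and> \<bar>q - \<alpha> * p\<bar> \<le> \<gamma> * p)"
    using \<gamma> by (auto simp: not_le) (smt (verit) mult_pos_neg abs_ge_zero)
  finally show ?thesis .
qed

text \<open>At the apex of a cone of half-opening \<open>arctan \<gamma>\<close> around the axis \<open>v + \<alpha> w\<close>, the complement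
  is the strict subgraph of \<open>q \<mapsto> \<alpha> q + (1 + \<alpha>\<^sup>2) \<bar>q\<bar> / \<gamma>\<close> in the frame rotated to that axis.\<close>
lemma lipschitz_chart_at_cone_complement:
  fixes U :: "(real^2) set" and v x :: "real^2"
  assumes vv: "v \<bullet> v = 1" and cc: "c * c = 1" and \<gamma>: "\<gamma> > 0" and r: "r > 0"
    and U: "\<And>y. y \<in> ball x r \<Longrightarrow> y \<in> U \<longleftrightarrow> \<not> (v \<bullet> (y - x) \<ge> 0 \<and>
               \<bar>(c *\<^sub>R perp v) \<bullet> (y - x) - \<alpha> * (v \<bullet> (y - x))\<bar> \<le> \<gamma> * (v \<bullet> (y - x)))"
  shows "lipschitz_chart_at U x"
proof -
  define w where "w = c *\<^sub>R perp v"
  define N where "N = sqrt (1 + \<alpha> * \<alpha>)"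
  have A0: "1 + \<alpha> * \<alpha> > 0" by (simp add: add_pos_nonneg)
  then have N0: "N > 0" and NN: "N * N = 1 + \<alpha> * \<alpha>" unfolding N_def by simp_all
  have ww: "w \<bullet> w = 1" unfolding w_def using vv cc by (simp add: perp_inner_perp algebra_simps)
  have wv: "w \<bullet> v = 0" "v \<bullet> w = 0" unfolding w_def by (simp_all add: perp_inner_self inner_perp_self)
  define axis' where "axis' = (1 / N) *\<^sub>R (w - \<alpha> *\<^sub>R v)"
  define axis where "axis = (1 / N) *\<^sub>R (v + \<alpha> *\<^sub>R w)"
  have "axis' \<bullet> axis' = (1 / N) * (1 / N) * (w \<bullet> w - 2 * \<alpha> * (w \<bullet> v) + \<alpha> * \<alpha> * (v \<bullet> v))"
    unfolding axis'_def by (simp add: inner_diff_left inner_diff_right inner_commute algebra_simps)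
  then have axis'_unit: "axis' \<bullet> axis' = 1" using ww wv vv NN N0 A0 by (simp add: field_simps)
  have "c * (c * z) = z" for z using cc by (simp add: mult.assoc[symmetric])
  then have axis_perp: "(- c) *\<^sub>R perp axis' = axis"
    unfolding vec_eq_iff forall_2 axis_def axis'_def w_def by (simp add: algebra_simps)
  define h where "h q = 0 + (\<alpha> - (1 + \<alpha> * \<alpha>) / \<gamma>) * q + (2 * (1 + \<alpha> * \<alpha>) / \<gamma>) * max (q + 0) 0" for q
  have h_abs: "h q = \<alpha> * q + (1 + \<alpha> * \<alpha>) * \<bar>q\<bar> / \<gamma>" for q
    unfolding h_def using \<gamma> by (cases "q \<ge> 0") (simp_all add: max_def field_simps)
  show ?thesis
  proof (rule lipschitz_chart_at_subgraph[OF axis'_unit _ _ r])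
    show "(- c) * (- c) = 1" using cc by simp
    show "(\<bar>\<alpha> - (1 + \<alpha> * \<alpha>) / \<gamma>\<bar> + \<bar>2 * (1 + \<alpha> * \<alpha>) / \<gamma>\<bar>)-lipschitz_on UNIV h"
      unfolding h_def[abs_def] by (rule lipschitz_on_affine_plus_ramp)
    fix y assume y: "y \<in> ball x r"
    define p where "p = v \<bullet> (y - x)"
    define q where "q = w \<bullet> (y - x)"
    have axis_y: "axis \<bullet> (y - x) = (p + \<alpha> * q) / N" unfolding axis_def p_def q_def
      by (simp add: inner_add_left divide_simps)
    have axis'_y: "axis' \<bullet> (y - x) = (q - \<alpha> * p) / N" unfolding axis'_def p_def q_def
      by (simp add: inner_diff_left divide_simps)
    have "axis \<bullet> (y - x) < h (axis' \<bullet> (y - x)) \<longleftrightarrow> \<not> (p \<ge> 0 \<and> \<bar>q - \<alpha> * p\<bar> \<le> \<gamma> * p)"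
      unfolding axis_y axis'_y h_abs N_def by (rule cone_in_rotated_coordinates[OF \<gamma>])
    then show "y \<in> U \<longleftrightarrow> ((- c) *\<^sub>R perp axis') \<bullet> (y - x) < h (axis' \<bullet> (y - x))"
      using U[OF y] unfolding axis_perp p_def q_def w_def by blast
  qed
qed

section \<open>Opening a slit on a line\<close>

lemma continuous_on_sgn_mult_ramp:
  fixes K z :: "'a::t2_space \<Rightarrow> real"
  assumes K: "continuous_on T K" and z: "continuous_on T z" and T: "open T"
    and neg: "\<And>x. x \<in> T \<Longrightarrow> z x = 0 \<Longrightarrow> K x < 0"
  shows "continuous_on T (\<lambda>x. sgn (z x) * max 0 (K x - \<bar>z x\<bar>))"
proof -
  have "isCont (\<lambda>x. sgn (z x) * max 0 (K x - \<bar>z x\<bar>)) x" if x: "x \<in> T" for x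
  proof -
    have Kc: "isCont K x" and zc: "isCont z x" using K z T x continuous_on_eq_continuous_at by auto
    have frozen_sign: "isCont (\<lambda>y. sgn (z x) * max 0 (K y - \<bar>z y\<bar>)) x"
      using Kc zc by (intro continuous_intros)
    have ev_less: "\<forall>\<^sub>F y in nhds x. g y < 0" if "isCont g x" "g x < 0" for g :: "'a \<Rightarrow> real"
      using that order_tendstoD(2) unfolding isCont_def eventually_nhds_conv_at by blast
    txt \<open>Where \<open>z\<close> vanishes the ramp is zero nearby, elsewhere the sign is locally constant.\<close>
    have "\<forall>\<^sub>F y in nhds x. K y - \<bar>z y\<bar> < 0 \<or> sgn (z y) = sgn (z x)"
    proof -
      consider "z x = 0" | "z x < 0" | "- z x < 0" by linarith
      then show ?thesis
      proof cases
        case 1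
        then have "K x - \<bar>z x\<bar> < 0" using neg[OF x] by simp
        then have "\<forall>\<^sub>F y in nhds x. K y - \<bar>z y\<bar> < 0"
          using Kc zc by (intro ev_less continuous_intros)
        then show ?thesis by (rule eventually_mono) simp
      next
        case 2
        then have "\<forall>\<^sub>F y in nhds x. z y < 0" using zc by (intro ev_less)
        then show ?thesis by (rule eventually_mono) (use 2 in simp)
      next
        case 3
        then have "\<forall>\<^sub>F y in nhds x. - z y < 0" using zc by (intro ev_less continuous_intros)
        then show ?thesis by (rule eventually_mono) (use 3 in simp)
      qed
    qed
    then have "\<forall>\<^sub>F y in nhds x. sgn (z y) * max 0 (K y - \<bar>z y\<bar>) = sgn (z x) * max 0 (K y - \<bar>z y\<bar>)"
      by (rule eventually_mono) auto
    from isCont_cong[OF this] frozen_sign show ?thesis by blast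
  qed
  then show ?thesis using T continuous_on_eq_continuous_at by blast
qed

text \<open>On a line of weight \<open>K \<ge> 0\<close>, \<open>push\<close> opens the puncture at \<open>0\<close> into the gap \<open>[-m s K, m s K]\<close>
  and is the identity for \<open>\<bar>z\<bar> \<ge> s K\<close>; \<open>unpush\<close> is its inverse.\<close>
definition push :: "real \<Rightarrow> real \<Rightarrow> real \<Rightarrow> real \<Rightarrow> real" where
  "push m s K z = z + m * (sgn z * max 0 (s * K - \<bar>z\<bar>))"

definition unpush :: "real \<Rightarrow> real \<Rightarrow> real \<Rightarrow> real \<Rightarrow> real" where
  "unpush m s K z = z - m / (1 - m) * (sgn z * max 0 (s * K - \<bar>z\<bar>))"

lemma push_minus: "push m s K (- z) = - push m s K z"
  by (simp add: push_def sgn_minus algebra_simps)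

lemma unpush_minus: "unpush m s K (- z) = - unpush m s K z"
  by (simp add: unpush_def sgn_minus algebra_simps)

context
  fixes m s :: real
  assumes m0: "0 < m" and m1: "m < 1" and s0: "0 < s"
begin

lemma push_pos:
  assumes "z > 0"
  shows "push m s K z > 0 \<and> \<not> (K \<ge> 0 \<and> push m s K z \<le> m * s * K)"
proof (cases "s * K \<le> z")
  case True
  have "m * s * K < z"
  proof (cases "K > 0")
    case True
    then have "m * (s * K) < s * K" using m1 s0 by simp
    then show ?thesis using \<open>s * K \<le> z\<close> by (simp add: mult.assoc)
  next
    case False
    then have "m * s * K \<le> 0" using m0 s0 by (simp add: mult_nonneg_nonpos)
    then show ?thesis using assms by simp
  qed
  then show ?thesis using True assms by (simp add: push_def)
next
  case False
  then have "push m s K z = m * (s * K) + (1 - m) * z" using assms by (simp add: push_def algebra_simps)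
  moreover have "(1 - m) * z > 0" using m1 assms by simp
  moreover have "m * (s * K) > 0" using False assms m0 by simp
  ultimately show ?thesis by (simp add: mult.assoc)
qed

lemma unpush_pos:
  assumes "z > 0" "\<not> (K \<ge> 0 \<and> z \<le> m * s * K)"
  shows "unpush m s K z > 0"
proof (cases "s * K \<le> z")
  case True
  then show ?thesis using assms by (simp add: unpush_def)
next
  case False
  then have "s * K > 0" using assms by linarith
  then have "K > 0" using s0 by (simp add: zero_less_mult_iff)
  moreover have "unpush m s K z = (z - m * s * K) / (1 - m)"
    using False assms m1 by (simp add: unpush_def field_simps)
  ultimately show ?thesis using assms m1 by simp
qed

lemma unpush_push_pos:
  assumes "z > 0"
  shows "unpush m s K (push m s K z) = z"
proof (cases "s * K \<le> z")
  case True
  then show ?thesis using assms by (simp add: push_def unpush_def)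
next
  case False
  then have e: "push m s K z = m * (s * K) + (1 - m) * z" using assms by (simp add: push_def algebra_simps)
  have "m * (s * K) + (1 - m) * z > 0" using push_pos[of z K] assms e by simp
  moreover have "s * K - (m * (s * K) + (1 - m) * z) = (1 - m) * (s * K - z)" by (simp add: algebra_simps)
  moreover have "(1 - m) * (s * K - z) > 0" using False m1 by simp
  ultimately show ?thesis unfolding e unpush_def using m1 by (simp add: field_simps)
qed

lemma push_unpush_pos:
  assumes "z > 0" "\<not> (K \<ge> 0 \<and> z \<le> m * s * K)"
  shows "push m s K (unpush m s K z) = z"
proof (cases "s * K \<le> z")
  case True
  then show ?thesis using assms by (simp add: push_def unpush_def)
next
  case False
  define u where "u = (z - m * s * K) / (1 - m)"
  have e: "unpush m s K z = u"
    using False assms m1 by (simp add: unpush_def u_def field_simps)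
  have "u > 0" using unpush_pos[OF assms] e by simp
  moreover have gap: "s * K - u = (s * K - z) / (1 - m)" using m1 by (simp add: u_def field_simps)
  moreover have "(s * K - z) / (1 - m) > 0" using False m1 by simp
  ultimately have "push m s K u = u + m * ((s * K - z) / (1 - m))" by (simp add: push_def)
  also have "\<dots> = ((z - m * s * K) + m * (s * K - z)) / (1 - m)" by (simp add: u_def add_divide_distrib)
  also have "\<dots> = z" using m1 by (simp add: field_simps)
  finally show ?thesis unfolding e .
qed

lemma push_avoids_gap:
  assumes "\<not> (K \<ge> 0 \<and> z = 0)"
  shows "\<not> (K \<ge> 0 \<and> \<bar>push m s K z\<bar> \<le> m * s * K)"
proof -
  consider "z > 0" | "- z > 0" | "z = 0" by linarith
  then show ?thesis
  proof cases
    case 1 then show ?thesis using push_pos[of z K] by simp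
  next
    case 2 then show ?thesis using push_pos[of "- z" K] by (simp add: push_minus)
  next
    case 3 then show ?thesis using assms by (simp add: push_def)
  qed
qed

lemma unpush_avoids_puncture:
  assumes "\<not> (K \<ge> 0 \<and> \<bar>z\<bar> \<le> m * s * K)"
  shows "\<not> (K \<ge> 0 \<and> unpush m s K z = 0)"
proof -
  consider "z > 0" | "- z > 0" | "z = 0" by linarith
  then show ?thesis
  proof cases
    case 1 then show ?thesis using unpush_pos[of z K] assms by auto
  next
    case 2 then show ?thesis using unpush_pos[of "- z" K] assms by (auto simp: unpush_minus)
  next
    case 3 then show ?thesis using assms m0 s0 by (simp add: unpush_def)
  qed
qed

lemma unpush_push:
  assumes "\<not> (K \<ge> 0 \<and> z = 0)"
  shows "unpush m s K (push m s K z) = z"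
proof -
  consider "z > 0" | "- z > 0" | "z = 0" by linarith
  then show ?thesis
  proof cases
    case 1 then show ?thesis by (rule unpush_push_pos)
  next
    case 2 then show ?thesis using unpush_push_pos[of "- z" K] by (simp add: push_minus unpush_minus)
  next
    case 3 then show ?thesis using assms by (simp add: push_def unpush_def)
  qed
qed

lemma push_unpush:
  assumes "\<not> (K \<ge> 0 \<and> \<bar>z\<bar> \<le> m * s * K)"
  shows "push m s K (unpush m s K z) = z"
proof -
  consider "z > 0" | "- z > 0" | "z = 0" by linarith
  then show ?thesis
  proof cases
    case 1 then show ?thesis using push_unpush_pos[of z K] assms by simp
  next
    case 2 then show ?thesis using push_unpush_pos[of "- z" K] assms by (simp add: push_minus unpush_minus)
  next
    case 3 then show ?thesis using assms by (simp add: push_def unpush_def)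
  qed
qed

end

section \<open>Affine functions of bounded slope\<close>

definition affine_slope_le :: "('a::real_inner \<Rightarrow> real) \<Rightarrow> real \<Rightarrow> bool" where
  "affine_slope_le f B \<longleftrightarrow> (\<exists>a c. norm a \<le> B \<and> (\<forall>x. f x = a \<bullet> x + c))"

lemma affine_slope_le_const: "B \<ge> 0 \<Longrightarrow> affine_slope_le (\<lambda>x. c) B"
  unfolding affine_slope_le_def by (rule exI[of _ 0]) auto

lemma affine_slope_le_inner: "affine_slope_le (\<lambda>x. a \<bullet> (x - p)) (norm a)"
  unfolding affine_slope_le_def by (rule exI[of _ a], rule exI[of _ "- (a \<bullet> p)"]) (auto simp: inner_diff_right)

lemma affine_slope_le_nonneg: "affine_slope_le f B \<Longrightarrow> B \<ge> 0"
  unfolding affine_slope_le_def using norm_ge_zero order_trans by blast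

lemma affine_slope_le_affine_comb:
  assumes "affine_slope_le f B1" "affine_slope_le g B2" "\<bar>u\<bar> * B1 + \<bar>v\<bar> * B2 \<le> B"
  shows "affine_slope_le (\<lambda>x. k + u * f x + v * g x) B"
proof -
  obtain a c where f: "norm a \<le> B1" "\<forall>x. f x = a \<bullet> x + c"
    using assms(1) unfolding affine_slope_le_def by blast
  obtain a' c' where g: "norm a' \<le> B2" "\<forall>x. g x = a' \<bullet> x + c'"
    using assms(2) unfolding affine_slope_le_def by blast
  have "norm (u *\<^sub>R a + v *\<^sub>R a') \<le> \<bar>u\<bar> * norm a + \<bar>v\<bar> * norm a'"
    using norm_triangle_ineq[of "u *\<^sub>R a" "v *\<^sub>R a'"] by simp
  also have "\<dots> \<le> B"
    using f(1) g(1) assms(3) mult_left_mono[of _ _ "\<bar>u\<bar>"] mult_left_mono[of _ _ "\<bar>v\<bar>"]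
    by (smt (verit) abs_ge_zero)
  finally have "norm (u *\<^sub>R a + v *\<^sub>R a') \<le> B" .
  moreover have "\<forall>x. k + u * f x + v * g x = (u *\<^sub>R a + v *\<^sub>R a') \<bullet> x + (k + u * c + v * c')"
    using f g by (simp add: inner_add_left algebra_simps)
  ultimately show ?thesis unfolding affine_slope_le_def by blast
qed

lemma polyhedron_affine_slope_le_sublevel:
  fixes f :: "'a::euclidean_space \<Rightarrow> real"
  assumes "affine_slope_le f B"
  shows "polyhedron {x. f x \<le> 0}"
proof -
  obtain a c where "\<forall>x. f x = a \<bullet> x + c" using assms unfolding affine_slope_le_def by blast
  then have "{x. f x \<le> 0} = {x. a \<bullet> x \<le> - c}" by auto
  then show ?thesis using polyhedron_halfspace_le by simp
qed

lemma affine_slope_le_scaleR_imp_affine: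
  fixes e :: "'b::real_normed_vector"
  assumes "affine_slope_le g B" "norm e = 1" "m \<ge> 0"
  shows "\<exists>A c. linear A \<and> onorm A \<le> m * B \<and> (\<forall>x. (m * g x) *\<^sub>R e = A x + c)"
proof -
  obtain a c where g: "norm a \<le> B" "\<forall>x. g x = a \<bullet> x + c"
    using assms(1) unfolding affine_slope_le_def by blast
  let ?A = "\<lambda>y. (m * (a \<bullet> y)) *\<^sub>R e"
  have "linear ?A" by (rule linearI) (auto simp: inner_add_right algebra_simps)
  moreover have "onorm ?A \<le> m * B"
  proof (rule onorm_bound)
    show "0 \<le> m * B" using affine_slope_le_nonneg[OF assms(1)] assms(3) by simp
    fix y
    have "\<bar>a \<bullet> y\<bar> \<le> B * norm y"
      using Cauchy_Schwarz_ineq2[of a y] mult_right_mono[OF g(1) norm_ge_zero[of y]] by linarith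
    then have "m * \<bar>a \<bullet> y\<bar> \<le> m * (B * norm y)"
      using assms(3) by (rule mult_left_mono)
    moreover have "norm (?A y) = m * \<bar>a \<bullet> y\<bar>" using assms(2,3) by (simp add: abs_mult)
    ultimately show "norm (?A y) \<le> m * B * norm y" by simp
  qed
  moreover have "\<forall>x. (m * g x) *\<^sub>R e = ?A x + (m * c) *\<^sub>R e" using g(2) by (simp add: algebra_simps)
  ultimately show ?thesis by blast
qed

section \<open>The frame of a corner\<close>

text \<open>Coordinates centred at the corner \<open>b\<close> with axes \<open>n\<close> and \<open>e = perp n\<close>: the slit is the graph of the
  profile (slopes \<open>al\<close>, \<open>be\<close>) over \<open>[-ra, rc]\<close>, where the tent is nonnegative, and \<open>height\<close> is
  the signed distance from the slit along \<open>e\<close>.\<close>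
locale corner_frame =
  fixes b n :: "real^2" and ra rc al be :: real
  assumes n_unit: "n \<bullet> n = 1" and ra_pos: "ra > 0" and rc_pos: "rc > 0"
begin

definition "e = perp n"
definition "abscissa x = n \<bullet> (x - b)"
definition "ordinate x = e \<bullet> (x - b)"
definition "tent t = 1 + t / ra - (1 / ra + 1 / rc) * max t 0"
definition "profile t = al * t + (be - al) * max t 0"
definition "weight x = tent (abscissa x)"
definition "height x = ordinate x - profile (abscissa x)"
definition "slit = {x. weight x \<ge> 0 \<and> height x = 0}"
definition "lens w = {x. weight x \<ge> 0 \<and> \<bar>height x\<bar> \<le> w * weight x}"
definition "bump s x = sgn (height x) * max 0 (s * weight x - \<bar>height x\<bar>)"
definition "Phi m s x = x + (m * bump s x) *\<^sub>R e"
definition "Psi m s x = x - (m / (1 - m) * bump s x) *\<^sub>R e"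

lemma e_unit: "e \<bullet> e = 1" and n_e: "n \<bullet> e = 0" and e_n: "e \<bullet> n = 0"
  using n_unit by (auto simp: e_def perp_inner_perp perp_inner_self inner_perp_self)

lemma norm_n: "norm n = 1" and norm_e: "norm e = 1"
  using n_unit e_unit by (simp_all add: norm_eq_sqrt_inner)

lemma abscissa_shift [simp]: "abscissa (x + t *\<^sub>R e) = abscissa x"
  and ordinate_shift [simp]: "ordinate (x + t *\<^sub>R e) = ordinate x + t"
  and weight_shift [simp]: "weight (x + t *\<^sub>R e) = weight x"
  and height_shift [simp]: "height (x + t *\<^sub>R e) = height x + t"
  by (auto simp: abscissa_def ordinate_def weight_def height_def algebra_simps inner_diff_right n_e e_unit)

lemma weight_shift_minus [simp]: "weight (x - t *\<^sub>R e) = weight x"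
  and height_shift_minus [simp]: "height (x - t *\<^sub>R e) = height x - t"
  using weight_shift[of x "- t"] height_shift[of x "- t"] by simp_all

lemma decomposition: "x = b + abscissa x *\<^sub>R n + ordinate x *\<^sub>R e"
  using unit_vec2_decomposition[OF n_unit, of "x - b"] by (simp add: abscissa_def ordinate_def e_def algebra_simps)

lemma continuous_on_weight: "continuous_on X weight"
  unfolding weight_def tent_def abscissa_def using ra_pos by (intro continuous_intros) auto

lemma continuous_on_height: "continuous_on X height"
  unfolding height_def profile_def ordinate_def abscissa_def by (intro continuous_intros)

lemma closed_slit: "closed slit"
  unfolding slit_def using continuous_on_weight continuous_on_height
  by (intro closed_Collect_conj closed_Collect_le closed_Collect_eq continuous_intros) auto

lemma closed_lens: "closed (lens w)"
  unfolding lens_def using continuous_on_weight continuous_on_height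
  by (intro closed_Collect_conj closed_Collect_le continuous_intros) auto

lemma height_Phi: "height (Phi m s x) = push m s (weight x) (height x)"
  and weight_Phi: "weight (Phi m s x) = weight x"
  by (simp_all add: Phi_def bump_def push_def)

lemma height_Psi: "height (Psi m s x) = unpush m s (weight x) (height x)"
  and weight_Psi: "weight (Psi m s x) = weight x"
  by (simp_all add: Psi_def bump_def unpush_def)

context
  fixes m s :: real
  assumes m0: "0 < m" and m1: "m < 1" and s0: "0 < s"
begin

lemma Phi_notin_lens: "x \<notin> slit \<Longrightarrow> Phi m s x \<notin> lens (m * s)"
  using push_avoids_gap[OF m0 m1 s0, of "weight x" "height x"]
  by (simp add: slit_def lens_def height_Phi weight_Phi)

lemma Psi_notin_slit: "x \<notin> lens (m * s) \<Longrightarrow> Psi m s x \<notin> slit"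
  using unpush_avoids_puncture[OF m0 m1 s0, of "weight x" "height x"]
  by (simp add: slit_def lens_def height_Psi weight_Psi)

lemma Psi_Phi:
  assumes "x \<notin> slit"
  shows "Psi m s (Phi m s x) = x"
proof -
  have "unpush m s (weight x) (push m s (weight x) (height x)) = height x"
    using unpush_push[OF m0 m1 s0] assms by (simp add: slit_def)
  then have "m / (1 - m) * bump s (Phi m s x) = push m s (weight x) (height x) - height x"
    unfolding bump_def height_Phi weight_Phi unpush_def by linarith
  also have "\<dots> = m * bump s x" by (simp add: push_def bump_def)
  finally show ?thesis by (simp add: Psi_def Phi_def)
qed

lemma Phi_Psi:
  assumes "x \<notin> lens (m * s)"
  shows "Phi m s (Psi m s x) = x"
proof -
  have "push m s (weight x) (unpush m s (weight x) (height x)) = height x"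
    using push_unpush[OF m0 m1 s0] assms by (simp add: lens_def)
  then have "m * bump s (Psi m s x) = height x - unpush m s (weight x) (height x)"
    unfolding bump_def height_Psi weight_Psi push_def by linarith
  also have "\<dots> = m / (1 - m) * bump s x" by (simp add: unpush_def bump_def)
  finally show ?thesis by (simp add: Psi_def Phi_def)
qed

lemma continuous_on_bump:
  assumes "open T" "\<And>x. x \<in> T \<Longrightarrow> height x = 0 \<Longrightarrow> weight x < 0"
  shows "continuous_on T (bump s)"
  unfolding bump_def
  by (rule continuous_on_sgn_mult_ramp)
    (use assms s0 continuous_on_weight continuous_on_height in \<open>auto intro: continuous_intros simp: mult_less_0_iff\<close>)

lemma continuous_on_Phi: "continuous_on (UNIV - slit) (Phi m s)"
proof -
  have "continuous_on (UNIV - slit) (bump s)"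
    by (rule continuous_on_bump) (use closed_slit in \<open>auto simp: slit_def open_Diff\<close>)
  then show ?thesis unfolding Phi_def by (intro continuous_intros)
qed

lemma continuous_on_Psi: "continuous_on (UNIV - lens (m * s)) (Psi m s)"
proof -
  have "continuous_on (UNIV - lens (m * s)) (bump s)"
    by (rule continuous_on_bump) (use closed_lens m0 s0 in \<open>auto simp: lens_def open_Diff zero_le_mult_iff\<close>)
  then show ?thesis unfolding Psi_def by (intro continuous_intros)
qed

lemma homeomorphism_Phi: "homeomorphism (UNIV - slit) (UNIV - lens (m * s)) (Phi m s) (Psi m s)"
  by (rule homeomorphismI[OF continuous_on_Phi continuous_on_Psi])
    (auto simp: Phi_notin_lens Psi_notin_slit Psi_Phi Phi_Psi)

end

lemma weight_left: "abscissa x \<le> 0 \<Longrightarrow> weight x = 1 + abscissa x / ra"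
  and height_left: "abscissa x \<le> 0 \<Longrightarrow> height x = ordinate x - al * abscissa x"
  and weight_right: "abscissa x \<ge> 0 \<Longrightarrow> weight x = 1 - abscissa x / rc"
  and height_right: "abscissa x \<ge> 0 \<Longrightarrow> height x = ordinate x - be * abscissa x"
  by (auto simp: weight_def height_def tent_def profile_def max_def algebra_simps)

lemma affine_slope_le_abscissa: "affine_slope_le abscissa 1"
  and affine_slope_le_ordinate: "affine_slope_le ordinate 1"
  using affine_slope_le_inner[of n b] affine_slope_le_inner[of e b] norm_n norm_e
  by (simp_all add: abscissa_def[abs_def] ordinate_def[abs_def])

lemma bump_upper:
  assumes "s > 0" "x \<notin> slit" "0 \<le> height x" "height x \<le> s * weight x"
  shows "bump s x = s * weight x - height x"
proof -
  have "height x \<noteq> 0" using assms by (auto simp: slit_def zero_le_mult_iff)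
  then show ?thesis using assms(3,4) by (simp add: bump_def)
qed

lemma bump_lower:
  assumes "s > 0" "x \<notin> slit" "height x \<le> 0" "- height x \<le> s * weight x"
  shows "bump s x = - s * weight x - height x"
proof -
  have "height x \<noteq> 0" using assms by (auto simp: slit_def zero_le_mult_iff)
  then show ?thesis using assms(3,4) by (simp add: bump_def)
qed

text \<open>On a half-plane where weight and height are affine, the lines \<open>height = \<plusminus>s weight\<close> and
  \<open>height = 0\<close> cut it into four polygons, on each of which the bump is affine.\<close>
lemma bump_pieces_on_halfplane:
  assumes side: "affine_slope_le side Bs" and K: "affine_slope_le K BK" and Z: "affine_slope_le Z BZ"
    and KZ: "\<And>x. side x \<le> 0 \<Longrightarrow> weight x = K x \<and> height x = Z x"
    and s: "s > 0" and B: "s * BK + BZ \<le> B"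
  shows "\<exists>\<P>. finite \<P> \<and> (\<forall>P\<in>\<P>. polyhedron P) \<and> {x. side x \<le> 0} \<subseteq> \<Union>\<P> \<and>
           (\<forall>P\<in>\<P>. \<exists>g. affine_slope_le g B \<and> (\<forall>x\<in>P - slit. bump s x = g x))"
proof -
  define H where "H = {x. side x \<le> 0}"
  define hp where "hp r1 r2 = {x. r1 * Z x + r2 * K x \<le> 0}" for r1 r2
  have B0: "B \<ge> 0"
    using affine_slope_le_nonneg[OF K] affine_slope_le_nonneg[OF Z] s B
    by (smt (verit) mult_nonneg_nonneg)
  have "polyhedron (hp r1 r2)" for r1 r2
    unfolding hp_def using polyhedron_affine_slope_le_sublevel[OF affine_slope_le_affine_comb[OF Z K order_refl, where k=0 and u=r1 and v=r2]]
    by simp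
  moreover have "polyhedron H"
    unfolding H_def using polyhedron_affine_slope_le_sublevel[OF affine_slope_le_affine_comb[OF side side order_refl, where k=0 and u=1 and v=0]]
    by simp
  ultimately have polys: "polyhedron (H \<inter> hp (-1) 0 \<inter> hp 1 (- s))" "polyhedron (H \<inter> hp 1 0 \<inter> hp (-1) (- s))"
    "polyhedron (H \<inter> hp (-1) s)" "polyhedron (H \<inter> hp 1 s)"
    by (auto intro: polyhedron_Int)
  have affine_bumps: "affine_slope_le (\<lambda>x. s * K x - Z x) B" "affine_slope_le (\<lambda>x. - s * K x - Z x) B"
    using affine_slope_le_affine_comb[OF K Z, where k=0 and u=s and v="-1" and B=B]
      affine_slope_le_affine_comb[OF K Z, where k=0 and u="-s" and v="-1" and B=B] s B
    by simp_all
  have "bump s x = s * K x - Z x" if "x \<in> H \<inter> hp (-1) 0 \<inter> hp 1 (- s) - slit" for x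
    using that KZ bump_upper[OF s, of x] unfolding H_def hp_def by auto
  then have piece1: "\<exists>g. affine_slope_le g B \<and> (\<forall>x\<in>H \<inter> hp (-1) 0 \<inter> hp 1 (- s) - slit. bump s x = g x)"
    using affine_bumps(1) by blast
  have "bump s x = - s * K x - Z x" if "x \<in> H \<inter> hp 1 0 \<inter> hp (-1) (- s) - slit" for x
    using that KZ bump_lower[OF s, of x] unfolding H_def hp_def by auto
  then have piece2: "\<exists>g. affine_slope_le g B \<and> (\<forall>x\<in>H \<inter> hp 1 0 \<inter> hp (-1) (- s) - slit. bump s x = g x)"
    using affine_bumps(2) by blast
  have "bump s x = 0" if "x \<in> H \<inter> hp (-1) s \<union> H \<inter> hp 1 s" for x
    using that KZ unfolding H_def hp_def bump_def by auto
  then have piece34: "\<exists>g. affine_slope_le g B \<and> (\<forall>x\<in>P - slit. bump s x = g x)"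
    if "P = H \<inter> hp (-1) s \<or> P = H \<inter> hp 1 s" for P
    using that affine_slope_le_const[OF B0] by blast
  have cover: "H \<subseteq> (H \<inter> hp (-1) 0 \<inter> hp 1 (- s)) \<union> (H \<inter> hp 1 0 \<inter> hp (-1) (- s)) \<union> (H \<inter> hp (-1) s \<union> H \<inter> hp 1 s)"
    unfolding hp_def by auto
  let ?\<P> = "{H \<inter> hp (-1) 0 \<inter> hp 1 (- s), H \<inter> hp 1 0 \<inter> hp (-1) (- s), H \<inter> hp (-1) s, H \<inter> hp 1 s}"
  have "finite ?\<P>" by simp
  moreover have "\<forall>P\<in>?\<P>. polyhedron P" using polys by simp
  moreover have "{x. side x \<le> 0} \<subseteq> \<Union>?\<P>" using cover unfolding H_def by (simp add: Un_assoc)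
  moreover have "\<forall>P\<in>?\<P>. \<exists>g. affine_slope_le g B \<and> (\<forall>x\<in>P - slit. bump s x = g x)"
    using piece1 piece2 piece34 by simp
  ultimately show ?thesis by blast
qed

definition "slope_bound s = s * (1 / ra + 1 / rc) + 1 + \<bar>al\<bar> + \<bar>be\<bar>"

lemma bump_piecewise_affine:
  assumes s: "s > 0"
  shows "\<exists>\<P>. finite \<P> \<and> (\<forall>P\<in>\<P>. polyhedron P) \<and> \<Union>\<P> = UNIV \<and>
           (\<forall>P\<in>\<P>. \<exists>g. affine_slope_le g (slope_bound s) \<and> (\<forall>x\<in>P - slit. bump s x = g x))"
proof -
  have comb: "affine_slope_le (\<lambda>x. r0 + r1 * ordinate x + r2 * abscissa x) (\<bar>r1\<bar> + \<bar>r2\<bar>)" for r0 r1 r2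
    using affine_slope_le_affine_comb[OF affine_slope_le_ordinate affine_slope_le_abscissa order_refl] by simp
  have slopes: "affine_slope_le (\<lambda>x. 1 + abscissa x / ra) (1 / ra)"
    "affine_slope_le (\<lambda>x. 1 - abscissa x / rc) (1 / rc)"
    "affine_slope_le (\<lambda>x. ordinate x - al * abscissa x) (1 + \<bar>al\<bar>)"
    "affine_slope_le (\<lambda>x. ordinate x - be * abscissa x) (1 + \<bar>be\<bar>)"
    "affine_slope_le (\<lambda>x. - abscissa x) 1"
    using comb[of 1 0 "1 / ra"] comb[of 1 0 "- 1 / rc"] comb[of 0 1 "- al"] comb[of 0 1 "- be"] comb[of 0 0 "- 1"]
      ra_pos rc_pos by simp_all
  have bounds: "s * (1 / ra) + (1 + \<bar>al\<bar>) \<le> slope_bound s" "s * (1 / rc) + (1 + \<bar>be\<bar>) \<le> slope_bound s"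
    using s ra_pos rc_pos unfolding slope_bound_def by (simp_all add: algebra_simps)
  have left: "weight x = 1 + abscissa x / ra \<and> height x = ordinate x - al * abscissa x"
    if "abscissa x \<le> 0" for x
    using that by (simp add: weight_left height_left)
  have right: "weight x = 1 - abscissa x / rc \<and> height x = ordinate x - be * abscissa x"
    if "- abscissa x \<le> 0" for x
    using that by (simp add: weight_right height_right)
  obtain \<P>l where "finite \<P>l" "\<forall>P\<in>\<P>l. polyhedron P" "{x. abscissa x \<le> 0} \<subseteq> \<Union>\<P>l"
    "\<forall>P\<in>\<P>l. \<exists>g. affine_slope_le g (slope_bound s) \<and> (\<forall>x\<in>P - slit. bump s x = g x)"
    using bump_pieces_on_halfplane[OF affine_slope_le_abscissa slopes(1,3) left s bounds(1)] by blast
  moreover obtain \<P>r where "finite \<P>r" "\<forall>P\<in>\<P>r. polyhedron P" "{x. - abscissa x \<le> 0} \<subseteq> \<Union>\<P>r"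
    "\<forall>P\<in>\<P>r. \<exists>g. affine_slope_le g (slope_bound s) \<and> (\<forall>x\<in>P - slit. bump s x = g x)"
    using bump_pieces_on_halfplane[OF slopes(5,2,4) right s bounds(2)] by blast
  moreover have "{x. abscissa x \<le> 0} \<union> {x. - abscissa x \<le> 0} = UNIV" by auto
  ultimately show ?thesis by (intro exI[of _ "\<P>l \<union> \<P>r"]) auto
qed

lemma tent_le_1: "tent t \<le> 1"
  using ra_pos rc_pos by (cases "t \<le> 0") (auto simp: tent_def max_def field_simps)

lemma weight_scaled_le: "s > 0 \<Longrightarrow> s * weight x \<le> s"
  using mult_left_mono[OF tent_le_1[of "abscissa x"], of s] by (simp add: weight_def)

lemma abs_bump_le:
  assumes "s > 0"
  shows "\<bar>bump s x\<bar> \<le> s"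
proof -
  have "\<bar>bump s x\<bar> \<le> max 0 (s * weight x - \<bar>height x\<bar>)"
    by (simp add: bump_def abs_mult abs_sgn_eq)
  also have "\<dots> \<le> s"
    by (intro max.boundedI) (use weight_scaled_le[OF assms, of x] assms abs_ge_zero[of "height x"] in linarith)+
  finally show ?thesis .
qed

lemma bump_nonzero: "bump s x \<noteq> 0 \<Longrightarrow> \<bar>height x\<bar> < s * weight x"
  by (auto simp: bump_def max_def split: if_splits)

lemma norm_Phi_minus_id_le: "m \<ge> 0 \<Longrightarrow> s > 0 \<Longrightarrow> norm (Phi m s x - x) \<le> m * s"
  using abs_bump_le[of s x] norm_e by (simp add: Phi_def abs_mult mult_left_mono)

lemma Phi_eq_id_outside_nbhd:
  assumes "s > 0" "s \<le> d" "x \<notin> nbhd slit d"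
  shows "Phi m s x = x"
proof (rule ccontr)
  assume "Phi m s x \<noteq> x"
  then have close: "\<bar>height x\<bar> < s * weight x" using bump_nonzero by (auto simp: Phi_def)
  then have "weight x > 0" using assms(1) abs_ge_zero le_less_trans zero_less_mult_pos by metis
  then have "x - height x *\<^sub>R e \<in> slit" by (simp add: slit_def)
  moreover have "height x *\<^sub>R e \<in> ball 0 d"
    using close weight_scaled_le[OF assms(1), of x] assms(2) norm_e by simp
  ultimately have "x - height x *\<^sub>R e \<in> slit \<and> height x *\<^sub>R e \<in> ball 0 d" by blast
  then have "x \<in> nbhd slit d"
    unfolding nbhd_def by force
  then show False using assms(3) by blast
qed

lemma Phi_minus_id_piecewise_affine:
  assumes "m \<ge> 0" "s > 0"
  shows "\<exists>\<P>. finite \<P> \<and> (\<forall>P\<in>\<P>. polyhedron P) \<and> \<Union>\<P> = UNIV \<and>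
     (\<forall>P\<in>\<P>. \<exists>A c. linear A \<and> onorm A \<le> m * slope_bound s \<and> (\<forall>x\<in>P - slit. Phi m s x - x = A x + c))"
proof -
  obtain \<P> where \<P>: "finite \<P>" "\<forall>P\<in>\<P>. polyhedron P" "\<Union>\<P> = UNIV"
    "\<forall>P\<in>\<P>. \<exists>g. affine_slope_le g (slope_bound s) \<and> (\<forall>x\<in>P - slit. bump s x = g x)"
    using bump_piecewise_affine[OF assms(2)] by blast
  have "\<exists>A c. linear A \<and> onorm A \<le> m * slope_bound s \<and> (\<forall>x\<in>P - slit. Phi m s x - x = A x + c)"
    if P: "P \<in> \<P>" for P
  proof -
    from \<P>(4) P obtain g
      where g: "affine_slope_le g (slope_bound s)" "\<And>x. x \<in> P - slit \<Longrightarrow> bump s x = g x"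
      by blast
    obtain A c where A: "linear A" "onorm A \<le> m * slope_bound s" "\<And>x. (m * g x) *\<^sub>R e = A x + c"
      using affine_slope_le_scaleR_imp_affine[OF g(1) norm_e assms(1)] by blast
    have "Phi m s x - x = A x + c" if "x \<in> P - slit" for x
      using g(2)[OF that] A(3)[of x] by (simp add: Phi_def)
    with A(1,2) show ?thesis by blast
  qed
  then have "\<forall>P\<in>\<P>. \<exists>A c. linear A \<and> onorm A \<le> m * slope_bound s \<and> (\<forall>x\<in>P - slit. Phi m s x - x = A x + c)"
    by blast
  with \<P>(1-3) show ?thesis by blast
qed

lemma piecewise_affine_Phi:
  assumes "m \<ge> 0" "s > 0"
  shows "piecewise_affine_on (UNIV - slit) (Phi m s)"
proof -
  obtain \<P> where \<P>: "finite \<P>" "\<forall>P\<in>\<P>. polyhedron P" "\<Union>\<P> = UNIV"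
    "\<forall>P\<in>\<P>. \<exists>g. affine_slope_le g (slope_bound s) \<and> (\<forall>x\<in>P - slit. bump s x = g x)"
    using bump_piecewise_affine[OF assms(2)] by blast
  have "\<forall>P\<in>\<P>. \<exists>A c. linear A \<and> (\<forall>x\<in>P \<inter> (UNIV - slit). Phi m s x = A x + c)"
  proof
    fix P assume "P \<in> \<P>"
    then obtain g where g: "affine_slope_le g (slope_bound s)" "\<forall>x\<in>P - slit. bump s x = g x"
      using \<P>(4) by blast
    obtain A c where A: "linear A" "\<forall>x. (m * g x) *\<^sub>R e = A x + c"
      using affine_slope_le_scaleR_imp_affine[OF g(1) norm_e assms(1)] by blast
    have "linear (\<lambda>y. y + A y)"
      using A(1) unfolding linear_iff by (simp add: linear_add linear_scale algebra_simps)
    moreover have "\<forall>x\<in>P \<inter> (UNIV - slit). Phi m s x = (x + A x) + c"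
      using g(2) A(2) by (auto simp: Phi_def)
    ultimately show "\<exists>A c. linear A \<and> (\<forall>x\<in>P \<inter> (UNIV - slit). Phi m s x = A x + c)"
      by (intro exI[of _ "\<lambda>y. y + A y"] exI[of _ c]) simp
  qed
  then show ?thesis
    unfolding piecewise_affine_on_def using \<P>(1-3) by (intro exI[of _ \<P>]) blast
qed

lemma AE_derivative_Phi_minus_id:
  assumes "m \<ge> 0" "s > 0"
  shows "AE x in lebesgue_on (UNIV - slit). (\<lambda>x. Phi m s x - x) differentiable (at x) \<and>
           onorm (frechet_derivative (\<lambda>x. Phi m s x - x) (at x)) \<le> m * slope_bound s"
proof -
  obtain \<P> where \<P>: "finite \<P>" "\<forall>P\<in>\<P>. polyhedron P" "\<Union>\<P> = UNIV"
    "\<forall>P\<in>\<P>. \<exists>A c. linear A \<and> onorm A \<le> m * slope_bound s \<and> (\<forall>x\<in>P - slit. Phi m s x - x = A x + c)"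
    using Phi_minus_id_piecewise_affine[OF assms] by blast
  show ?thesis
  proof (rule AE_differentiable_onorm_le_piecewise_affine[OF _ \<P>(1)])
    show "open (UNIV - slit)" using closed_slit by (simp add: open_Diff)
    show "convex P" if "P \<in> \<P>" for P using that \<P>(2) polyhedron_imp_convex by blast
    show "UNIV - slit \<subseteq> \<Union>\<P>" using \<P>(3) by blast
    show "\<exists>A c. linear A \<and> onorm A \<le> m * slope_bound s \<and> (\<forall>x\<in>P \<inter> (UNIV - slit). Phi m s x - x = A x + c)"
      if "P \<in> \<P>" for P
    proof -
      have "P \<inter> (UNIV - slit) = P - slit" by blast
      then show ?thesis using that \<P>(4) by simp
    qed
  qed
qed

lemma slit_complement_nonempty: "UNIV - slit \<noteq> {}"
proof -
  have "height (b + e) = 1"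
    by (simp add: height_def abscissa_def ordinate_def profile_def e_unit n_e)
  then have "b + e \<notin> slit" by (simp add: slit_def)
  then show ?thesis by blast
qed

lemma W1inf_norm_Phi_minus_id_le:
  assumes "0 \<le> m" "0 < s"
  shows "W1inf_norm (UNIV - slit) (\<lambda>x. Phi m s x - x) \<le> ereal (m * s + m * slope_bound s)"
  by (rule W1inf_norm_le[OF _ AE_derivative_Phi_minus_id[OF assms]]) (use norm_Phi_minus_id_le assms in blast)

lemma W1inf_norm_Phi_minus_id_tendsto_0:
  "((\<lambda>\<delta>. W1inf_norm (UNIV - slit) (\<lambda>x. Phi \<delta> \<delta> x - x)) \<longlongrightarrow> 0) (at_right 0)"
proof (rule tendsto_sandwich[where f="\<lambda>_. 0" and h="\<lambda>\<delta>. ereal (\<delta> * \<delta> + \<delta> * slope_bound \<delta>)"])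
  show "\<forall>\<^sub>F \<delta> in at_right 0. 0 \<le> W1inf_norm (UNIV - slit) (\<lambda>x. Phi \<delta> \<delta> x - x)"
    by (intro always_eventually allI W1inf_norm_nonneg)
      (use closed_slit slit_complement_nonempty in \<open>simp_all add: open_Diff\<close>)
  show "\<forall>\<^sub>F \<delta> in at_right 0. W1inf_norm (UNIV - slit) (\<lambda>x. Phi \<delta> \<delta> x - x) \<le> ereal (\<delta> * \<delta> + \<delta> * slope_bound \<delta>)"
    using eventually_at_right_less by (rule eventually_mono) (simp add: W1inf_norm_Phi_minus_id_le)
  have "((\<lambda>\<delta>. \<delta> * \<delta> + \<delta> * slope_bound \<delta>) \<longlongrightarrow> 0 * 0 + 0 * slope_bound 0) (at_right 0)"
    unfolding slope_bound_def by (intro tendsto_intros)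
  then have "((\<lambda>\<delta>. \<delta> * \<delta> + \<delta> * slope_bound \<delta>) \<longlongrightarrow> 0) (at_right 0)" by simp
  from tendsto_ereal[OF this]
  show "((\<lambda>\<delta>. ereal (\<delta> * \<delta> + \<delta> * slope_bound \<delta>)) \<longlongrightarrow> 0) (at_right 0)"
    by (simp add: zero_ereal_def)
qed simp

definition "arc_point t = b + t *\<^sub>R n + profile t *\<^sub>R e"

lemma abscissa_arc_point: "abscissa (arc_point t) = t"
  and ordinate_arc_point: "ordinate (arc_point t) = profile t"
  by (simp_all add: arc_point_def abscissa_def ordinate_def inner_add_right n_unit n_e e_unit e_n)

lemma tent_nonneg_iff: "tent t \<ge> 0 \<longleftrightarrow> - ra \<le> t \<and> t \<le> rc"
  using ra_pos rc_pos by (cases "t \<le> 0") (auto simp: tent_def max_def field_simps)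

lemma tent_eq_0_iff: "tent t = 0 \<longleftrightarrow> t = - ra \<or> t = rc"
  using ra_pos rc_pos by (cases "t \<le> 0") (auto simp: tent_def max_def field_simps)

lemma slit_eq_image: "slit = arc_point ` {-ra..rc}"
proof
  show "slit \<subseteq> arc_point ` {-ra..rc}"
  proof
    fix x assume "x \<in> slit"
    then have "abscissa x \<in> {-ra..rc}" and "ordinate x = profile (abscissa x)"
      by (auto simp: slit_def weight_def height_def tent_nonneg_iff)
    moreover from this(2) have "x = arc_point (abscissa x)"
      using decomposition[of x] by (simp add: arc_point_def)
    ultimately show "x \<in> arc_point ` {-ra..rc}" by blast
  qed
  show "arc_point ` {-ra..rc} \<subseteq> slit"
    by (auto simp: slit_def weight_def height_def tent_nonneg_iff abscissa_arc_point ordinate_arc_point)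
qed

lemma slit_eq_segments:
  "slit = closed_segment (b - ra *\<^sub>R (n + al *\<^sub>R e)) b \<union> closed_segment b (b + rc *\<^sub>R (n + be *\<^sub>R e))"
proof -
  have "arc_point ` {-ra..0} = (\<lambda>t. b + t *\<^sub>R (n + al *\<^sub>R e)) ` {-ra..0}"
    by (rule image_cong) (auto simp: arc_point_def profile_def algebra_simps)
  also have "\<dots> = closed_segment (b - ra *\<^sub>R (n + al *\<^sub>R e)) b"
    using image_affine_Icc_eq_closed_segment[of "- ra" 0 b] ra_pos by simp
  finally have left: "arc_point ` {-ra..0} = closed_segment (b - ra *\<^sub>R (n + al *\<^sub>R e)) b" .
  have "arc_point ` {0..rc} = (\<lambda>t. b + t *\<^sub>R (n + be *\<^sub>R e)) ` {0..rc}"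
    by (rule image_cong) (auto simp: arc_point_def profile_def algebra_simps)
  also have "\<dots> = closed_segment b (b + rc *\<^sub>R (n + be *\<^sub>R e))"
    using image_affine_Icc_eq_closed_segment[of 0 rc b] rc_pos by simp
  finally have right: "arc_point ` {0..rc} = closed_segment b (b + rc *\<^sub>R (n + be *\<^sub>R e))" .
  have "{-ra..rc} = {-ra..0} \<union> {0..rc}" using ra_pos rc_pos by auto
  then show ?thesis using slit_eq_image left right by (simp add: image_Un)
qed

lemma connected_slit_complement: "connected (UNIV - slit)"
proof -
  have "continuous_on {-ra..rc} arc_point"
    unfolding arc_point_def profile_def by (intro continuous_intros)
  moreover have "inj_on arc_point {-ra..rc}" by (metis inj_onI abscissa_arc_point)
  ultimately obtain g where "homeomorphism {-ra..rc} slit arc_point g"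
    using homeomorphism_compact[OF compact_Icc _ slit_eq_image[symmetric]] by blast
  then have "slit homeomorphic {-ra..rc}"
    using homeomorphic_def homeomorphic_sym by blast
  then have "connected (- slit)"
    by (rule connected_complement_homeomorphic_convex_compact) auto
  then show ?thesis by (simp add: Compl_eq_Diff_UNIV)
qed

lemma abscissa_diff: "abscissa y = abscissa x + n \<bullet> (y - x)"
  and ordinate_diff: "ordinate y = ordinate x + e \<bullet> (y - x)"
  by (simp_all add: abscissa_def ordinate_def inner_diff_right)

lemma abs_inner_n_le_dist: "\<bar>n \<bullet> (y - x)\<bar> \<le> dist x y"
  using Cauchy_Schwarz_ineq2[of n "y - x"] norm_n by (simp add: dist_norm norm_minus_commute)

lemma lipschitz_chart_at_lens_left_tip:
  assumes w: "w > 0" and x: "abscissa x = - ra" "height x = 0"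
  shows "lipschitz_chart_at (UNIV - lens w) x"
proof (rule lipschitz_chart_at_cone_complement[OF n_unit _ _ ra_pos, where c=1 and \<gamma>="w / ra" and \<alpha>=al])
  show "w / ra > 0" using w ra_pos by simp
  fix y assume "y \<in> ball x ra"
  define p where "p = n \<bullet> (y - x)"
  have "abscissa y \<le> 0" using abs_inner_n_le_dist[of y x] abscissa_diff[of y x] x(1) \<open>y \<in> ball x ra\<close> by simp
  moreover have "ordinate x = - al * ra" using height_left[of x] x ra_pos by (simp add: algebra_simps)
  ultimately have "weight y = p / ra" "height y = (1 *\<^sub>R perp n) \<bullet> (y - x) - al * p"
    using weight_left[of y] height_left[of y] abscissa_diff[of y x] ordinate_diff[of y x] x(1) ra_pos
    by (simp_all add: p_def e_def field_simps)
  moreover have "0 \<le> p / ra \<longleftrightarrow> 0 \<le> p" using ra_pos by (simp add: zero_le_divide_iff)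
  ultimately show "y \<in> UNIV - lens w \<longleftrightarrow> \<not> (p \<ge> 0 \<and> \<bar>(1 *\<^sub>R perp n) \<bullet> (y - x) - al * p\<bar> \<le> w / ra * p)"
    by (simp add: lens_def)
qed simp

lemma lipschitz_chart_at_lens_right_tip:
  assumes w: "w > 0" and x: "abscissa x = rc" "height x = 0"
  shows "lipschitz_chart_at (UNIV - lens w) x"
proof (rule lipschitz_chart_at_cone_complement[of "- n", where c="-1" and \<gamma>="w / rc" and \<alpha>="- be", OF _ _ _ rc_pos])
  show "(- n) \<bullet> (- n) = 1" "w / rc > 0" using n_unit w rc_pos by simp_all
  fix y assume "y \<in> ball x rc"
  define p where "p = (- n) \<bullet> (y - x)"
  have "abscissa y \<ge> 0" using abs_inner_n_le_dist[of y x] abscissa_diff[of y x] x(1) \<open>y \<in> ball x rc\<close> by simp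
  moreover have "ordinate x = be * rc" using height_right[of x] x rc_pos by (simp add: algebra_simps)
  ultimately have "weight y = p / rc" "height y = ((- 1) *\<^sub>R perp (- n)) \<bullet> (y - x) - (- be) * p"
    using weight_right[of y] height_right[of y] abscissa_diff[of y x] ordinate_diff[of y x] x(1) rc_pos
    by (simp_all add: p_def e_def perp_minus field_simps)
  moreover have "0 \<le> p / rc \<longleftrightarrow> 0 \<le> p" using rc_pos by (simp add: zero_le_divide_iff)
  ultimately show "y \<in> UNIV - lens w \<longleftrightarrow>
      \<not> (p \<ge> 0 \<and> \<bar>((- 1) *\<^sub>R perp (- n)) \<bullet> (y - x) - (- be) * p\<bar> \<le> w / rc * p)"
    by (simp add: lens_def)
qed simp

lemma lipschitz_chart_at_lens_edge:
  assumes w: "w > 0" and c: "c = 1 \<or> c = - 1" and x: "weight x > 0" "c * height x = w * weight x"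
  shows "lipschitz_chart_at (UNIV - lens w) x"
proof -
  have "open {y. 0 < weight y \<and> 0 < c * height y + w * weight y}"
    by (intro open_Collect_conj open_Collect_less continuous_intros continuous_on_weight continuous_on_height)
  moreover have "0 < c * height x + w * weight x" using x w by simp
  ultimately obtain r where r: "r > 0" "ball x r \<subseteq> {y. 0 < weight y \<and> 0 < c * height y + w * weight y}"
    using x(1) open_contains_ball by blast
  define h where "h q = (c * ordinate x - c * al * abscissa x - w - w * abscissa x / ra) + (- c * al - w / ra) * q
    + (- c * (be - al) + w * (1 / ra + 1 / rc)) * max (q + abscissa x) 0" for q
  have h_eq: "h q = c * (ordinate x - profile (abscissa x + q)) - w * tent (abscissa x + q)" for q
    unfolding h_def profile_def tent_def by (simp add: algebra_simps add_divide_distrib)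
  show ?thesis
  proof (rule lipschitz_chart_at_subgraph[OF n_unit _ _ r(1), where c="- c" and h=h])
    show "(- c) * (- c) = 1" using c by auto
    show "(\<bar>- c * al - w / ra\<bar> + \<bar>- c * (be - al) + w * (1 / ra + 1 / rc)\<bar>)-lipschitz_on UNIV h"
      unfolding h_def[abs_def] by (rule lipschitz_on_affine_plus_ramp)
    fix y assume "y \<in> ball x r"
    then have y: "0 < weight y" "0 < c * height y + w * weight y" using r(2) by auto
    have "y \<in> UNIV - lens w \<longleftrightarrow> w * weight y < c * height y"
      using y c unfolding lens_def by (cases "c = 1") (auto simp: abs_if)
    also have "\<dots> \<longleftrightarrow> - (c * (e \<bullet> (y - x))) < c * (ordinate x - profile (abscissa y)) - w * tent (abscissa y)"
      unfolding height_def weight_def ordinate_diff[of y x] distrib_left right_diff_distrib by linarith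
    also have "\<dots> \<longleftrightarrow> ((- c) *\<^sub>R perp n) \<bullet> (y - x) < h (n \<bullet> (y - x))"
      using h_eq abscissa_diff[of y x] by (simp add: e_def)
    finally show "y \<in> UNIV - lens w \<longleftrightarrow> ((- c) *\<^sub>R perp n) \<bullet> (y - x) < h (n \<bullet> (y - x))" .
  qed
qed

lemma lipschitz_chart_at_lens_frontier:
  assumes w: "w > 0" and x: "x \<in> frontier (UNIV - lens w)"
  shows "lipschitz_chart_at (UNIV - lens w) x"
proof -
  have "open (UNIV - lens w)" using closed_lens by (simp add: open_Diff)
  then have "x \<in> lens w" and x_closure: "x \<in> closure (UNIV - lens w)"
    using x by (auto simp: frontier_def interior_open)
  then have in_lens: "weight x \<ge> 0" "\<bar>height x\<bar> \<le> w * weight x" by (auto simp: lens_def)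
  have not_inner: "\<not> (0 < weight x \<and> 0 < w * weight x - \<bar>height x\<bar>)"
  proof
    assume inner: "0 < weight x \<and> 0 < w * weight x - \<bar>height x\<bar>"
    have "open {y. 0 < weight y \<and> 0 < w * weight y - \<bar>height y\<bar>}"
      by (intro open_Collect_conj open_Collect_less continuous_intros continuous_on_weight continuous_on_height)
    moreover have "{y. 0 < weight y \<and> 0 < w * weight y - \<bar>height y\<bar>} \<inter> (UNIV - lens w) = {}"
      by (auto simp: lens_def)
    ultimately show False using inner x_closure open_Int_closure_eq_empty by blast
  qed
  consider "weight x = 0" | "weight x > 0" "height x = w * weight x" | "weight x > 0" "- height x = w * weight x"
    using in_lens not_inner by linarith
  then show ?thesis
  proof cases
    case 1
    then have "height x = 0" using in_lens(2) by simp
    moreover have "abscissa x = - ra \<or> abscissa x = rc"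
      using 1 tent_eq_0_iff by (simp add: weight_def)
    ultimately show ?thesis using lipschitz_chart_at_lens_left_tip lipschitz_chart_at_lens_right_tip w by blast
  next
    case 2
    then show ?thesis using lipschitz_chart_at_lens_edge[OF w, of 1] by simp
  next
    case 3
    then show ?thesis using lipschitz_chart_at_lens_edge[OF w, of "- 1"] by simp
  qed
qed

lemma lipschitz_domain_lens_complement:
  assumes "0 < m" "m < 1" "0 < s"
  shows "lipschitz_domain (UNIV - lens (m * s))"
  unfolding lipschitz_domain_iff
proof (intro conjI ballI)
  show "open (UNIV - lens (m * s))" using closed_lens by (simp add: open_Diff)
  have "Phi m s ` (UNIV - slit) = UNIV - lens (m * s)"
    using homeomorphism_image1[OF homeomorphism_Phi[OF assms]] .
  then show "connected (UNIV - lens (m * s))"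
    using connected_continuous_image[OF continuous_on_Phi[OF assms] connected_slit_complement] by simp
  show "lipschitz_chart_at (UNIV - lens (m * s)) x" if "x \<in> frontier (UNIV - lens (m * s))" for x
    using lipschitz_chart_at_lens_frontier that assms by simp
qed

end

text \<open>The normal axis \<open>n\<close> bisects the angle between the directions \<open>u\<close>, \<open>v\<close> of the two segments,
  so both segments are graphs over it.\<close>
lemma corner_frame_of_two_segments:
  fixes a b c :: "real^2"
  assumes "a \<noteq> b" "b \<noteq> c" "closed_segment a b \<inter> closed_segment b c = {b}"
  shows "\<exists>n ra rc al be. corner_frame n ra rc \<and>
     a = b - ra *\<^sub>R (n + al *\<^sub>R perp n) \<and> c = b + rc *\<^sub>R (n + be *\<^sub>R perp n)"
proof -
  define u where "u = sgn (a - b)"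
  define v where "v = sgn (c - b)"
  have uu: "u \<bullet> u = 1" and vv: "v \<bullet> v = 1"
    using assms(1,2) by (simp_all add: u_def v_def dot_square_norm norm_sgn)
  have "u \<noteq> v" using sgn_diff_neq_if_segments_meet_at_endpoint[OF assms] by (simp add: u_def v_def)
  define d where "d = v - u"
  have dd: "d \<bullet> d > 0" using \<open>u \<noteq> v\<close> by (simp add: d_def)
  have du: "d \<bullet> u = - (d \<bullet> d) / 2" and dv: "d \<bullet> v = (d \<bullet> d) / 2"
    using uu vv by (simp_all add: d_def inner_diff_left inner_diff_right inner_commute field_simps)
  define n where "n = sgn d"
  have n_unit: "n \<bullet> n = 1" using dd by (simp add: n_def dot_square_norm norm_sgn)
  have n_inner: "n \<bullet> w = (d \<bullet> w) / norm d" for w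
    by (simp add: n_def sgn_div_norm divide_inverse_commute)
  have "n \<bullet> (a - b) = norm (a - b) * (n \<bullet> u)"
    using assms(1) by (simp add: u_def sgn_div_norm)
  then have sa: "n \<bullet> (a - b) < 0"
    using assms(1) du dd by (simp add: n_inner mult_pos_neg divide_neg_pos)
  have "n \<bullet> (c - b) = norm (c - b) * (n \<bullet> v)"
    using assms(2) by (simp add: v_def sgn_div_norm)
  then have sc: "n \<bullet> (c - b) > 0"
    using assms(2) dv dd by (simp add: n_inner)
  define al where "al = (perp n \<bullet> (a - b)) / (n \<bullet> (a - b))"
  define be where "be = (perp n \<bullet> (c - b)) / (n \<bullet> (c - b))"
  have "corner_frame n (- (n \<bullet> (a - b))) (n \<bullet> (c - b))"
    unfolding corner_frame_def using n_unit sa sc by simp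
  moreover have "a - b = (n \<bullet> (a - b)) *\<^sub>R (n + al *\<^sub>R perp n)"
    using unit_vec2_decomposition[OF n_unit, of "a - b"] sa by (simp add: al_def scaleR_add_right)
  then have "a = b - (- (n \<bullet> (a - b))) *\<^sub>R (n + al *\<^sub>R perp n)"
    by (simp add: diff_eq_eq add.commute)
  moreover have "c - b = (n \<bullet> (c - b)) *\<^sub>R (n + be *\<^sub>R perp n)"
    using unit_vec2_decomposition[OF n_unit, of "c - b"] sc by (simp add: be_def scaleR_add_right)
  then have "c = b + (n \<bullet> (c - b)) *\<^sub>R (n + be *\<^sub>R perp n)"
    by (simp add: diff_eq_eq add.commute)
  ultimately show ?thesis by blast
qed

lemma segment_or_two_segments_imp_two_segments:
  assumes "segment_or_two_segments P"
  obtains a b c where "a \<noteq> b" "b \<noteq> c" "closed_segment a b \<inter> closed_segment b c = {b}"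
    "P = closed_segment a b \<union> closed_segment b c"
proof -
  from assms consider (one) a b where "a \<noteq> b" "P = closed_segment a b"
    | (two) a b c where "a \<noteq> b" "b \<noteq> c" "closed_segment a b \<inter> closed_segment b c = {b}"
        "P = closed_segment a b \<union> closed_segment b c"
    unfolding segment_or_two_segments_def by blast
  then show ?thesis
  proof cases
    case one
    define m where "m = midpoint a b"
    have m: "m \<in> closed_segment a b" by (simp add: m_def)
    show ?thesis
    proof (rule that)
      show "a \<noteq> m" using one(1) by (simp add: m_def eq_commute[of a])
      show "m \<noteq> b" using one(1) by (simp add: m_def)
      show "closed_segment a m \<inter> closed_segment m b = {m}" using Int_closed_segment m by blast
      show "P = closed_segment a m \<union> closed_segment m b" using Un_closed_segment[OF m] one(2) by simp
    qed
  next
    case two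
    then show ?thesis by (rule that)
  qed
qed

theorem lemma3p2:
  fixes Pi_set :: "(real^2) set"
  assumes "segment_or_two_segments Pi_set"
  shows "\<exists>\<delta>0>0. \<exists>Delta::real \<Rightarrow> (real^2) set. \<exists>Phi::real \<Rightarrow> real^2 \<Rightarrow> real^2.
     (\<forall>\<delta>. 0 < \<delta> \<and> \<delta> < \<delta>0 \<longrightarrow>
        (\<exists>Psi. homeomorphism (UNIV - Pi_set) (UNIV - Delta \<delta>) (Phi \<delta>) Psi) \<and>
        piecewise_affine_on (UNIV - Pi_set) (Phi \<delta>) \<and>
        lipschitz_domain (UNIV - Delta \<delta>) \<and>
        (\<forall>x \<in> UNIV - nbhd Pi_set \<delta>. Phi \<delta> x = x)) \<and>
     ((\<lambda>\<delta>. W1inf_norm (UNIV - Pi_set) (\<lambda>x. Phi \<delta> x - x)) \<longlongrightarrow> 0) (at_right 0)"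
proof -
  obtain a b c where abc: "a \<noteq> b" "b \<noteq> c" "closed_segment a b \<inter> closed_segment b c = {b}"
    and Pi: "Pi_set = closed_segment a b \<union> closed_segment b c"
    using segment_or_two_segments_imp_two_segments[OF assms] .
  obtain n ra rc al be where frame: "corner_frame n ra rc"
    and a: "a = b - ra *\<^sub>R (n + al *\<^sub>R perp n)" and c: "c = b + rc *\<^sub>R (n + be *\<^sub>R perp n)"
    using corner_frame_of_two_segments[OF abc] by blast
  interpret F: corner_frame b n ra rc al be by (fact frame)
  have slit: "F.slit = Pi_set" using F.slit_eq_segments by (simp add: Pi a c F.e_def)
  show ?thesis
  proof (intro exI[of _ 1] exI[of _ "\<lambda>\<delta>. F.lens (\<delta> * \<delta>)"] exI[of _ "\<lambda>\<delta>. F.Phi \<delta> \<delta>"] conjI allI impI)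
    fix \<delta> :: real assume "0 < \<delta> \<and> \<delta> < 1"
    then have \<delta>: "0 < \<delta>" "\<delta> < 1" by auto
    show "\<exists>Psi. homeomorphism (UNIV - Pi_set) (UNIV - F.lens (\<delta> * \<delta>)) (F.Phi \<delta> \<delta>) Psi"
      using F.homeomorphism_Phi[OF \<delta> \<delta>(1)] slit by blast
    show "piecewise_affine_on (UNIV - Pi_set) (F.Phi \<delta> \<delta>)"
      using F.piecewise_affine_Phi \<delta> slit by simp
    show "lipschitz_domain (UNIV - F.lens (\<delta> * \<delta>))"
      using F.lipschitz_domain_lens_complement[OF \<delta> \<delta>(1)] .
    show "\<forall>x \<in> UNIV - nbhd Pi_set \<delta>. F.Phi \<delta> \<delta> x = x"
      using F.Phi_eq_id_outside_nbhd[of \<delta> \<delta>] \<delta> slit by blast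
  next
    show "((\<lambda>\<delta>. W1inf_norm (UNIV - Pi_set) (\<lambda>x. F.Phi \<delta> \<delta> x - x)) \<longlongrightarrow> 0) (at_right 0)"
      using F.W1inf_norm_Phi_minus_id_tendsto_0 slit by simp
  qed simp
qed

end
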